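(* Let $(\mathfrak g,\mathfrak k,\theta)$ be a reductive symmetric superpair and $x\in\mathfrak p_0$. Then \[\dim\mathfrak z_{\mathfrak k_1}(x)-\dim\mathfrak z_{\mathfrak p_1}(x)=\dim\mathfrak k_1-\dim\mathfrak p_1,\] where $\mathfrak z_{V}(x)=\{y\in V:[x,y]=0\}$.
   Context: A symmetric superpair $(\mathfrak g,\mathfrak k,\theta)$: finite-dimensional complex Lie superalgebra $\mathfrak g$, even involutive automorphism $\theta$, $\mathfrak k,\mathfrak p$ the $(+1),(-1)$-eigenspaces, $\mathfrak k_j=\mathfrak k\cap\mathfrak g_j$, $\mathfrak p_j=\mathfrak p\cap\mathfrak g_j$. Reductive: $\mathfrak g$ semisimple as $\mathfrak g_0$-module, $\mathfrak z(\mathfrak g)\subset\mathfrak g_0$, and there is a non-degenerate even supersymmetric $\mathfrak g$- and $\theta$-invariant bilinear form $b$ on $\mathfrak g$. *)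

theory Defs
  imports Complex_Main
begin

text \<open>A finite-dimensional complex Lie superalgebra is modelled on a type 'v with a
  complex scalar multiplication scale (so 'v is the whole of g), a Z/2-grading
  g = g0 (+) g1 given by two subspaces, and a bracket br.  Parities are booleans
  (False = even, True = odd).\<close>

definition grd :: "'v set \<Rightarrow> 'v set \<Rightarrow> bool \<Rightarrow> 'v set" where
  "grd g0 g1 i = (if i then g1 else g0)"

definition psign :: "bool \<Rightarrow> bool \<Rightarrow> complex" where
  "psign i j = (if i \<and> j then -1 else 1)"

definition fin_dim_complex_space :: "(complex \<Rightarrow> 'v::ab_group_add \<Rightarrow> 'v) \<Rightarrow> bool" where
  "fin_dim_complex_space scale \<longleftrightarrow>
     vector_space scale \<and> (\<exists>B. finite B \<and> module.span scale B = UNIV)"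

definition lie_superalgebra ::
  "(complex \<Rightarrow> 'v::ab_group_add \<Rightarrow> 'v) \<Rightarrow> 'v set \<Rightarrow> 'v set \<Rightarrow> ('v \<Rightarrow> 'v \<Rightarrow> 'v) \<Rightarrow> bool" where
  "lie_superalgebra scale g0 g1 br \<longleftrightarrow>
     fin_dim_complex_space scale
   \<and> module.subspace scale g0 \<and> module.subspace scale g1
   \<and> g0 \<inter> g1 = {0} \<and> (\<forall>v. \<exists>a\<in>g0. \<exists>c\<in>g1. v = a + c)
   \<and> (\<forall>x. Vector_Spaces.linear scale scale (br x))
   \<and> (\<forall>y. Vector_Spaces.linear scale scale (\<lambda>x. br x y))
   \<and> (\<forall>i j x y. x \<in> grd g0 g1 i \<longrightarrow> y \<in> grd g0 g1 j \<longrightarrow> br x y \<in> grd g0 g1 (i \<noteq> j))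
   \<and> (\<forall>i j x y. x \<in> grd g0 g1 i \<longrightarrow> y \<in> grd g0 g1 j \<longrightarrow>
        br x y = scale (- psign i j) (br y x))
   \<and> (\<forall>i j k x y z. x \<in> grd g0 g1 i \<longrightarrow> y \<in> grd g0 g1 j \<longrightarrow> z \<in> grd g0 g1 k \<longrightarrow>
        br x (br y z) = br (br x y) z + scale (psign i j) (br y (br x z)))"

definition even_involution ::
  "(complex \<Rightarrow> 'v::ab_group_add \<Rightarrow> 'v) \<Rightarrow> 'v set \<Rightarrow> 'v set \<Rightarrow> ('v \<Rightarrow> 'v \<Rightarrow> 'v) \<Rightarrow> ('v \<Rightarrow> 'v) \<Rightarrow> bool" where
  "even_involution scale g0 g1 br \<theta> \<longleftrightarrow>
     Vector_Spaces.linear scale scale \<theta> \<and> bij \<theta>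
   \<and> (\<forall>x y. \<theta> (br x y) = br (\<theta> x) (\<theta> y))
   \<and> \<theta> ` g0 \<subseteq> g0 \<and> \<theta> ` g1 \<subseteq> g1
   \<and> (\<forall>x. \<theta> (\<theta> x) = x)"

definition symmetric_superpair ::
  "(complex \<Rightarrow> 'v::ab_group_add \<Rightarrow> 'v) \<Rightarrow> 'v set \<Rightarrow> 'v set \<Rightarrow> ('v \<Rightarrow> 'v \<Rightarrow> 'v) \<Rightarrow> ('v \<Rightarrow> 'v) \<Rightarrow> bool" where
  "symmetric_superpair scale g0 g1 br \<theta> \<longleftrightarrow>
     lie_superalgebra scale g0 g1 br \<and> even_involution scale g0 g1 br \<theta>"

definition kpart :: "('v \<Rightarrow> 'v) \<Rightarrow> 'v set" where
  "kpart \<theta> = {x. \<theta> x = x}"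

definition ppart :: "('v::ab_group_add \<Rightarrow> 'v) \<Rightarrow> 'v set" where
  "ppart \<theta> = {x. \<theta> x = - x}"

definition centralizer :: "('v \<Rightarrow> 'v \<Rightarrow> 'v::zero) \<Rightarrow> 'v set \<Rightarrow> 'v \<Rightarrow> 'v set" where
  "centralizer br V x = {y \<in> V. br x y = 0}"

definition g0_submodule ::
  "(complex \<Rightarrow> 'v::ab_group_add \<Rightarrow> 'v) \<Rightarrow> 'v set \<Rightarrow> ('v \<Rightarrow> 'v \<Rightarrow> 'v) \<Rightarrow> 'v set \<Rightarrow> bool" where
  "g0_submodule scale g0 br W \<longleftrightarrow>
     module.subspace scale W \<and> (\<forall>a\<in>g0. \<forall>w\<in>W. br a w \<in> W)"

definition semisimple_g0_module ::
  "(complex \<Rightarrow> 'v::ab_group_add \<Rightarrow> 'v) \<Rightarrow> 'v set \<Rightarrow> ('v \<Rightarrow> 'v \<Rightarrow> 'v) \<Rightarrow> bool" where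
  "semisimple_g0_module scale g0 br \<longleftrightarrow>
     (\<forall>W. g0_submodule scale g0 br W \<longrightarrow>
        (\<exists>W'. g0_submodule scale g0 br W' \<and> W \<inter> W' = {0} \<and> (\<forall>v. \<exists>a\<in>W. \<exists>c\<in>W'. v = a + c)))"

definition center :: "('v \<Rightarrow> 'v \<Rightarrow> 'v::zero) \<Rightarrow> 'v set" where
  "center br = {z. \<forall>y. br z y = 0}"

definition good_form ::
  "(complex \<Rightarrow> 'v::ab_group_add \<Rightarrow> 'v) \<Rightarrow> 'v set \<Rightarrow> 'v set \<Rightarrow> ('v \<Rightarrow> 'v \<Rightarrow> 'v) \<Rightarrow> ('v \<Rightarrow> 'v)
     \<Rightarrow> ('v \<Rightarrow> 'v \<Rightarrow> complex) \<Rightarrow> bool" where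
  "good_form scale g0 g1 br \<theta> b \<longleftrightarrow>
     (\<forall>x. Vector_Spaces.linear scale (*) (b x))
   \<and> (\<forall>y. Vector_Spaces.linear scale (*) (\<lambda>x. b x y))
   \<and> (\<forall>x. (\<forall>y. b x y = 0) \<longrightarrow> x = 0)
   \<and> (\<forall>x\<in>g0. \<forall>y\<in>g1. b x y = 0 \<and> b y x = 0)
   \<and> (\<forall>i j x y. x \<in> grd g0 g1 i \<longrightarrow> y \<in> grd g0 g1 j \<longrightarrow> b x y = psign i j * b y x)
   \<and> (\<forall>x y z. b (br x y) z = b x (br y z))
   \<and> (\<forall>x y. b (\<theta> x) (\<theta> y) = b x y)"

definition reductive_symmetric_superpair ::
  "(complex \<Rightarrow> 'v::ab_group_add \<Rightarrow> 'v) \<Rightarrow> 'v set \<Rightarrow> 'v set \<Rightarrow> ('v \<Rightarrow> 'v \<Rightarrow> 'v) \<Rightarrow> ('v \<Rightarrow> 'v) \<Rightarrow> bool" where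
  "reductive_symmetric_superpair scale g0 g1 br \<theta> \<longleftrightarrow>
     symmetric_superpair scale g0 g1 br \<theta>
   \<and> semisimple_g0_module scale g0 br
   \<and> center br \<subseteq> g0
   \<and> (\<exists>b. good_form scale g0 g1 br \<theta> b)"

end

theory Submission
  imports Defs
begin

(* Because theta(x) = -x and x is even, ad x maps k1 into p1 and
   p1 into k1; by invariance and supersymmetry of b it is skew-adjoint on g1; by
   theta-invariance of b the spaces k1 and p1 are b-orthogonal, so b restricts to
   non-degenerate forms on k1 and on p1.  A linear map f between two spaces carrying
   non-degenerate forms that is skew-adjoint has  rank (f|K) <= codim (ker f|P)  (the image
   f(K) lies in the annihilator of ker (f|P)); applied in both directions this gives
   dim k1 - dim z_k1(x) = dim p1 - dim z_p1(x), which is the claim. *)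

lemmas linear_hom_add = module_hom.add[OF module_hom_linearI]
  and linear_hom_scale = module_hom.scale[OF module_hom_linearI]
  and linear_hom_neg = module_hom.neg[OF module_hom_linearI]
  and linear_hom_diff = module_hom.diff[OF module_hom_linearI]
  and linear_hom_zero = module_hom.zero[OF module_hom_linearI]
  and linear_hom_kernel_subspace = module_hom.subspace_kernel[OF module_hom_linearI]
  and linear_hom_eq_0_on_span = module_hom.eq_0_on_span[OF module_hom_linearI]

context vector_space begin

lemma subspace_kernel_within:
  assumes "Vector_Spaces.linear scale s f" and "subspace S"
  shows "subspace {y \<in> S. f y = 0}"
proof -
  have "{y \<in> S. f y = 0} = S \<inter> {y. f y = 0}" by auto
  then show ?thesis using assms by (simp add: subspace_inter linear_hom_kernel_subspace)
qed

end

context finite_dimensional_vector_space begin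

lemma dim_le_dim_kernel_Suc:
  assumes S: "subspace S" and g: "Vector_Spaces.linear scale (*) g"
  shows "dim S \<le> dim {y \<in> S. g y = 0} + 1"
proof (cases "\<forall>y\<in>S. g y = 0")
  case True
  then have "{y \<in> S. g y = 0} = S" by auto
  then show ?thesis by simp
next
  case False
  then obtain y0 where y0: "y0 \<in> S" "g y0 \<noteq> 0" by auto
  let ?K = "{y \<in> S. g y = 0}"
  have "S \<subseteq> span (insert y0 ?K)"
  proof
    fix y assume y: "y \<in> S"
    define c where "c = g y / g y0"
    have "y - c *s y0 \<in> ?K"
      using y y0 S by (simp add: c_def subspace_diff subspace_scale
          linear_hom_diff[OF g] linear_hom_scale[OF g])
    then have "(y - c *s y0) + c *s y0 \<in> span (insert y0 ?K)"
      by (intro span_add span_scale span_base) auto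
    then show "y \<in> span (insert y0 ?K)" by simp
  qed
  then have "dim S \<le> dim (insert y0 ?K)" by (rule dim_mono)
  also have "\<dots> \<le> dim ?K + 1" by (simp add: dim_insert)
  finally show ?thesis .
qed

lemma dim_le_dim_common_kernel_plus_card:
  assumes "finite E" and "subspace S" and g: "\<And>e. e \<in> E \<Longrightarrow> Vector_Spaces.linear scale (*) (g e)"
  shows "dim S \<le> dim {y \<in> S. \<forall>e\<in>E. g e y = 0} + card E"
  using assms
proof (induction E arbitrary: S rule: finite_induct)
  case empty
  then show ?case by simp
next
  case (insert a E)
  let ?S' = "{y \<in> S. g a y = 0}"
  have "dim S \<le> dim ?S' + 1"
    using insert.prems by (intro dim_le_dim_kernel_Suc) auto
  moreover have "dim ?S' \<le> dim {y \<in> ?S'. \<forall>e\<in>E. g e y = 0} + card E"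
    using insert.prems by (intro insert.IH subspace_kernel_within) auto
  moreover have "{y \<in> ?S'. \<forall>e\<in>E. g e y = 0} = {y \<in> S. \<forall>e\<in>insert a E. g e y = 0}" by auto
  ultimately show ?case using insert.hyps by simp
qed

lemma subspace_complement_span:
  assumes P: "subspace P" and Z: "subspace Z" and "Z \<subseteq> P"
  obtains E where "finite E" "E \<subseteq> P" "card E + dim Z = dim P"
    "\<And>z. z \<in> P \<Longrightarrow> \<exists>c\<in>span E. \<exists>z'\<in>Z. z = c + z'"
proof -
  obtain BZ where BZ: "BZ \<subseteq> Z" "independent BZ" "span BZ = Z" "card BZ = dim Z"
    using basis_subspace_exists[OF Z] by blast
  obtain B where B: "BZ \<subseteq> B" "B \<subseteq> P" "independent B" "P \<subseteq> span B"
    using maximal_independent_subset_extend[of BZ P] BZ assms(3) by blast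
  have fin: "finite B" using B(3) finiteI_independent by blast
  have card: "card B = dim P" using basis_card_eq_dim[OF B(2,4,3)] .
  have "card (B - BZ) + dim Z = dim P"
    using fin B(1) BZ(4) card by (metis card_Diff_subset card_mono finite_subset le_add_diff_inverse2)
  moreover have "\<exists>c\<in>span (B - BZ). \<exists>z'\<in>Z. z = c + z'" if "z \<in> P" for z
  proof -
    have "z \<in> span ((B - BZ) \<union> BZ)" using that B(1,4) by (auto simp: Un_absorb2)
    then show ?thesis unfolding span_Un BZ(3) by blast
  qed
  ultimately show ?thesis using that[of "B - BZ"] fin B(2) by blast
qed

text \<open>Let f map K into P and let it be skew-adjoint for a bilinear
  form b that is non-degenerate on P.  Then f(K) is orthogonal to the kernel of f on P,
  which forces rank (f|K) <= dim P - dim ker (f|P).\<close>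
lemma skew_adjoint_kernel_dim_le:
  assumes K: "subspace K" and P: "subspace P"
    and f: "Vector_Spaces.linear scale scale f" and fKP: "\<And>y. y \<in> K \<Longrightarrow> f y \<in> P"
    and b_left: "\<And>z. Vector_Spaces.linear scale (*) (\<lambda>u. b u z)"
    and b_right: "\<And>u. Vector_Spaces.linear scale (*) (b u)"
    and nondeg: "\<And>u. u \<in> P \<Longrightarrow> (\<forall>z\<in>P. b u z = 0) \<Longrightarrow> u = 0"
    and skew: "\<And>y z. y \<in> K \<Longrightarrow> z \<in> P \<Longrightarrow> b (f y) z = - b y (f z)"
  shows "dim K + dim {z \<in> P. f z = 0} \<le> dim {y \<in> K. f y = 0} + dim P"
proof -
  let ?Z = "{z \<in> P. f z = 0}"
  obtain E where E: "finite E" "E \<subseteq> P" "card E + dim ?Z = dim P"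
    and decomp: "\<And>z. z \<in> P \<Longrightarrow> \<exists>c\<in>span E. \<exists>z'\<in>?Z. z = c + z'"
    using subspace_complement_span[OF P subspace_kernel_within[OF f P]] by blast
  let ?KE = "{y \<in> K. \<forall>e\<in>E. b y (f e) = 0}"
  have "dim K \<le> dim ?KE + card E"
    by (rule dim_le_dim_common_kernel_plus_card[OF E(1) K b_left])
  moreover have "?KE \<subseteq> {y \<in> K. f y = 0}"
  proof
    fix y assume y: "y \<in> ?KE"
    have "b y (f c) = 0" if "c \<in> span E" for c
      using linear_hom_eq_0_on_span[OF Vector_Spaces.linear_compose[OF f b_right]] y that
      by auto
    have "\<forall>z\<in>P. b (f y) z = 0"
    proof
      fix z assume z: "z \<in> P"
      obtain c z' where c: "c \<in> span E" "f z' = 0" "z = c + z'" using decomp[OF z] by blast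
      then have "b y (f z) = 0"
        using \<open>\<And>c. c \<in> span E \<Longrightarrow> b y (f c) = 0\<close>
        by (simp add: linear_hom_add[OF f] linear_hom_add[OF b_right] linear_hom_zero[OF b_right])
      then show "b (f y) z = 0" using skew[of y z] y z by simp
    qed
    then show "y \<in> {y \<in> K. f y = 0}" using nondeg fKP y by auto
  qed
  then have "dim ?KE \<le> dim {y \<in> K. f y = 0}" by (rule dim_subset)
  ultimately show ?thesis using E(3) by linarith
qed

lemma skew_adjoint_kernel_codim_eq:
  assumes K: "subspace K" and P: "subspace P"
    and f: "Vector_Spaces.linear scale scale f"
    and fKP: "\<And>y. y \<in> K \<Longrightarrow> f y \<in> P" and fPK: "\<And>y. y \<in> P \<Longrightarrow> f y \<in> K"
    and b_left: "\<And>z. Vector_Spaces.linear scale (*) (\<lambda>u. b u z)"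
    and b_right: "\<And>u. Vector_Spaces.linear scale (*) (b u)"
    and nondeg_K: "\<And>u. u \<in> K \<Longrightarrow> (\<forall>z\<in>K. b u z = 0) \<Longrightarrow> u = 0"
    and nondeg_P: "\<And>u. u \<in> P \<Longrightarrow> (\<forall>z\<in>P. b u z = 0) \<Longrightarrow> u = 0"
    and skew: "\<And>y z. y \<in> K \<union> P \<Longrightarrow> z \<in> K \<union> P \<Longrightarrow> b (f y) z = - b y (f z)"
  shows "int (dim {y \<in> K. f y = 0}) - int (dim {z \<in> P. f z = 0}) = int (dim K) - int (dim P)"
proof -
  have "dim K + dim {z \<in> P. f z = 0} \<le> dim {y \<in> K. f y = 0} + dim P"
    using K P f fKP b_left b_right nondeg_P skew by (rule skew_adjoint_kernel_dim_le) auto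
  moreover have "dim P + dim {y \<in> K. f y = 0} \<le> dim {z \<in> P. f z = 0} + dim K"
    using P K f fPK b_left b_right nondeg_K skew by (rule skew_adjoint_kernel_dim_le) auto
  ultimately show ?thesis by linarith
qed

end

lemma fin_dim_complex_space_basis:
  assumes "fin_dim_complex_space scale"
  obtains B where "finite_dimensional_vector_space scale B"
proof -
  interpret vector_space scale using assms unfolding fin_dim_complex_space_def by blast
  obtain S where S: "finite S" "span S = UNIV"
    using assms unfolding fin_dim_complex_space_def by blast
  obtain B where B: "B \<subseteq> S" "independent B" "S \<subseteq> span B"
    using maximal_independent_subset[of S] by blast
  have "span B = UNIV" using span_mono[OF B(3)] S(2) by (auto simp: span_span)
  then have "finite_dimensional_vector_space scale B"
    using B S(1) by unfold_locales (auto intro: finite_subset)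
  then show ?thesis by (rule that)
qed

locale superpair_with_form =
  fixes scale :: "complex \<Rightarrow> 'v::ab_group_add \<Rightarrow> 'v"
    and g0 g1 :: "'v set" and br :: "'v \<Rightarrow> 'v \<Rightarrow> 'v" and \<theta> :: "'v \<Rightarrow> 'v"
    and b :: "'v \<Rightarrow> 'v \<Rightarrow> complex"
  assumes superpair: "symmetric_superpair scale g0 g1 br \<theta>"
    and form: "good_form scale g0 g1 br \<theta> b"
begin

sublocale vector_space scale
  using superpair unfolding symmetric_superpair_def lie_superalgebra_def fin_dim_complex_space_def
  by blast

lemma finite_dimensional: obtains B where "finite_dimensional_vector_space scale B"
proof -
  have "fin_dim_complex_space scale"
    using superpair unfolding symmetric_superpair_def lie_superalgebra_def by blast
  then show ?thesis using fin_dim_complex_space_basis that by blast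
qed

lemma superalgebra_facts:
  shows g1_subspace: "subspace g1"
    and even_odd_decomposition: "\<exists>a\<in>g0. \<exists>c\<in>g1. v = a + c"
    and bracket_linear: "Vector_Spaces.linear scale scale (br x)"
    and bracket_linear_left: "Vector_Spaces.linear scale scale (\<lambda>x. br x y)"
    and bracket_even_odd: "x \<in> g0 \<Longrightarrow> y \<in> g1 \<Longrightarrow> br x y \<in> g1"
    and bracket_even_odd_antisym: "x \<in> g0 \<Longrightarrow> y \<in> g1 \<Longrightarrow> br x y = - br y x"
proof -
  have ls: "lie_superalgebra scale g0 g1 br"
    using superpair unfolding symmetric_superpair_def by blast
  then show "subspace g1" "\<exists>a\<in>g0. \<exists>c\<in>g1. v = a + c" "Vector_Spaces.linear scale scale (br x)"
      "Vector_Spaces.linear scale scale (\<lambda>x. br x y)"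
    unfolding lie_superalgebra_def by blast+
  have grading: "\<And>i j x y. x \<in> grd g0 g1 i \<Longrightarrow> y \<in> grd g0 g1 j \<Longrightarrow> br x y \<in> grd g0 g1 (i \<noteq> j)"
    and skew: "\<And>i j x y. x \<in> grd g0 g1 i \<Longrightarrow> y \<in> grd g0 g1 j \<Longrightarrow>
      br x y = scale (- psign i j) (br y x)"
    using ls unfolding lie_superalgebra_def by blast+
  show "x \<in> g0 \<Longrightarrow> y \<in> g1 \<Longrightarrow> br x y \<in> g1"
    using grading[of x False y True] by (simp add: grd_def)
  show "x \<in> g0 \<Longrightarrow> y \<in> g1 \<Longrightarrow> br x y = - br y x"
    using skew[of x False y True] by (simp add: grd_def psign_def scale_minus_left)
qed

lemma involution_facts:
  shows theta_linear: "Vector_Spaces.linear scale scale \<theta>"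
    and theta_bracket: "\<theta> (br x y) = br (\<theta> x) (\<theta> y)"
    and theta_odd: "y \<in> g1 \<Longrightarrow> \<theta> y \<in> g1"
    and theta_theta: "\<theta> (\<theta> y) = y"
  using superpair unfolding symmetric_superpair_def even_involution_def by blast+

lemma form_facts:
  shows form_linear_left: "Vector_Spaces.linear scale (*) (\<lambda>u. b u z)"
    and form_linear_right: "Vector_Spaces.linear scale (*) (b u)"
    and form_nondegenerate: "(\<And>w. b u w = 0) \<Longrightarrow> u = 0"
    and form_odd_even: "u \<in> g1 \<Longrightarrow> a \<in> g0 \<Longrightarrow> b u a = 0"
    and form_invariant: "b (br u v) w = b u (br v w)"
    and form_theta: "b (\<theta> u) (\<theta> v) = b u v"
proof -
  have "\<forall>u. Vector_Spaces.linear scale (*) (b u)" "\<forall>z. Vector_Spaces.linear scale (*) (\<lambda>u. b u z)"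
    "\<forall>u. (\<forall>w. b u w = 0) \<longrightarrow> u = 0" "\<forall>a\<in>g0. \<forall>u\<in>g1. b a u = 0 \<and> b u a = 0"
    "\<forall>u v w. b (br u v) w = b u (br v w)" "\<forall>u v. b (\<theta> u) (\<theta> v) = b u v"
    using form unfolding good_form_def by blast+
  then show "Vector_Spaces.linear scale (*) (\<lambda>u. b u z)" "Vector_Spaces.linear scale (*) (b u)"
    "(\<And>w. b u w = 0) \<Longrightarrow> u = 0" "u \<in> g1 \<Longrightarrow> a \<in> g0 \<Longrightarrow> b u a = 0"
    "b (br u v) w = b u (br v w)" "b (\<theta> u) (\<theta> v) = b u v"
    by blast+
qed

abbreviation k1 :: "'v set" where "k1 \<equiv> kpart \<theta> \<inter> g1"
abbreviation p1 :: "'v set" where "p1 \<equiv> ppart \<theta> \<inter> g1"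

lemma eigenspaces_subspace: "subspace k1" "subspace p1"
  using g1_subspace unfolding kpart_def ppart_def subspace_def
  by (auto simp: linear_hom_add[OF theta_linear] linear_hom_scale[OF theta_linear]
      linear_hom_zero[OF theta_linear] scale_minus_right)

lemma odd_eigen_decomposition:
  assumes "c \<in> g1"
  shows "\<exists>c1\<in>k1. \<exists>c2\<in>p1. c = c1 + c2"
proof -
  define c1 where "c1 = scale (1/2) (c + \<theta> c)"
  define c2 where "c2 = scale (1/2) (c - \<theta> c)"
  have "c1 + c2 = scale (1/2) (c + c)"
    unfolding c1_def c2_def by (simp add: scale_right_distrib[symmetric])
  also have "\<dots> = c" by (simp add: scale_right_distrib scale_left_distrib[symmetric])
  finally have "c = c1 + c2" ..
  moreover have "\<theta> c1 = c1" "\<theta> c2 = - c2"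
    unfolding c1_def c2_def
    by (simp_all add: linear_hom_scale[OF theta_linear] linear_hom_add[OF theta_linear]
        linear_hom_diff[OF theta_linear] theta_theta add.commute scale_minus_right[symmetric])
  moreover have "c1 \<in> g1" "c2 \<in> g1"
    unfolding c1_def c2_def using assms theta_odd g1_subspace
    by (simp_all add: subspace_add subspace_diff subspace_scale)
  ultimately show ?thesis unfolding kpart_def ppart_def by blast
qed

text \<open>By \<theta>-invariance of b, the eigenspaces of \<theta> are b-orthogonal to each other.\<close>
lemma form_eigenspaces_orthogonal:
  assumes "u \<in> kpart \<theta>" and "v \<in> ppart \<theta>"
  shows "b u v = 0" and "b v u = 0"
proof -
  have "b u v = b u (- v)" "b v u = b (- v) u"
    using form_theta[of u v] form_theta[of v u] assms unfolding kpart_def ppart_def by auto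
  then show "b u v = 0" "b v u = 0"
    by (simp_all add: linear_hom_neg[OF form_linear_right] linear_hom_neg[OF form_linear_left])
qed

text \<open>Since b pairs g1 only with g1, and k1 only with k1 inside g1, the restrictions of b to
  k1 and to p1 are non-degenerate.\<close>
lemma form_nondegenerate_on_eigenspace:
  assumes V: "V = kpart \<theta> \<or> V = ppart \<theta>" and u: "u \<in> V \<inter> g1"
    and orth: "\<forall>z\<in>V \<inter> g1. b u z = 0"
  shows "u = 0"
proof (rule form_nondegenerate)
  fix w
  obtain a c where a: "a \<in> g0" and c: "c \<in> g1" and w: "w = a + c"
    using even_odd_decomposition by blast
  obtain c1 c2 where c1: "c1 \<in> k1" and c2: "c2 \<in> p1" and c12: "c = c1 + c2"
    using odd_eigen_decomposition[OF c] by blast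
  have "b u c1 = 0 \<and> b u c2 = 0"
    using V u orth c1 c2 form_eigenspaces_orthogonal by auto
  moreover have "b u a = 0" using form_odd_even u a by blast
  ultimately show "b u w = 0" using w c12 by (simp add: linear_hom_add[OF form_linear_right])
qed

context
  fixes x assumes x: "x \<in> ppart \<theta> \<inter> g0"
begin

lemma ad_swaps_eigenspaces: "y \<in> k1 \<Longrightarrow> br x y \<in> p1" "y \<in> p1 \<Longrightarrow> br x y \<in> k1"
proof -
  have "\<theta> (br x y) = - br x (\<theta> y)" for y
    using x theta_bracket[of x y] linear_hom_neg[OF bracket_linear_left]
    unfolding ppart_def by auto
  then show "y \<in> k1 \<Longrightarrow> br x y \<in> p1" "y \<in> p1 \<Longrightarrow> br x y \<in> k1"
    using x bracket_even_odd unfolding kpart_def ppart_def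
    by (auto simp: linear_hom_neg[OF bracket_linear])
qed

lemma ad_skew_adjoint:
  assumes "y \<in> g1"
  shows "b (br x y) z = - b y (br x z)"
proof -
  have "b (br x y) z = b (- br y x) z"
    using bracket_even_odd_antisym x assms by simp
  also have "\<dots> = - b y (br x z)"
    by (simp add: linear_hom_neg[OF form_linear_left] form_invariant)
  finally show ?thesis .
qed

lemma centralizer_codim_eq:
  "int (dim (centralizer br k1 x)) - int (dim (centralizer br p1 x)) = int (dim k1) - int (dim p1)"
proof -
  obtain B where "finite_dimensional_vector_space scale B" by (rule finite_dimensional)
  then interpret finite_dimensional_vector_space scale B .
  show ?thesis
    unfolding centralizer_def
  proof (rule skew_adjoint_kernel_codim_eq[OF eigenspaces_subspace bracket_linear
        ad_swaps_eigenspaces form_linear_left form_linear_right])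
    show "u = 0" if "u \<in> k1" "\<forall>z\<in>k1. b u z = 0" for u
      using that by (intro form_nondegenerate_on_eigenspace[of "kpart \<theta>"]) auto
    show "u = 0" if "u \<in> p1" "\<forall>z\<in>p1. b u z = 0" for u
      using that by (intro form_nondegenerate_on_eigenspace[of "ppart \<theta>"]) auto
    show "b (br x y) z = - b y (br x z)" if "y \<in> k1 \<union> p1" for y z
      using that by (intro ad_skew_adjoint) auto
  qed
qed

end

end

theorem mainTheorem5:
  fixes scale :: "complex \<Rightarrow> 'v::ab_group_add \<Rightarrow> 'v"
    and g0 g1 :: "'v set" and br :: "'v \<Rightarrow> 'v \<Rightarrow> 'v" and \<theta> :: "'v \<Rightarrow> 'v" and x :: 'v
  assumes "reductive_symmetric_superpair scale g0 g1 br \<theta>"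
    and "x \<in> ppart \<theta> \<inter> g0"
  shows "int (vector_space.dim scale (centralizer br (kpart \<theta> \<inter> g1) x))
           - int (vector_space.dim scale (centralizer br (ppart \<theta> \<inter> g1) x))
         = int (vector_space.dim scale (kpart \<theta> \<inter> g1))
           - int (vector_space.dim scale (ppart \<theta> \<inter> g1))"
proof -
  obtain b where "good_form scale g0 g1 br \<theta> b"
    using assms(1) unfolding reductive_symmetric_superpair_def by blast
  moreover have "symmetric_superpair scale g0 g1 br \<theta>"
    using assms(1) unfolding reductive_symmetric_superpair_def by blast
  ultimately interpret superpair_with_form scale g0 g1 br \<theta> b
    by unfold_locales
  show ?thesis by (rule centralizer_codim_eq[OF assms(2)])
qed

end
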